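(* For integers $n\ge 2$ and $0\le i\le n$, let $f_{n,i}$ be the number of paths in $\mathrm{Bal}^*(n,i)$ containing at least one $D$ step. Then $$f_{n,i}=\binom{2n-2}{n-i-1}-\binom{2n-2}{n-i-2}-\binom{n-2}{n-i-1}.$$
   Context: Binomial coefficients $\binom{a}{c}$ with $a\ge 0$ are $0$ if $c<0$ or $c>a$. $\mathrm{Bal}^*(n,i)$ is the set of lattice paths from $(0,0)$ to $(n,i)$ with steps $U=(1,1)$, $D=(1,-1)$ and horizontal steps $(1,0)$ colored umber or denim, never going below the $x$-axis, such that no umber step occurs at height $0$ and no denim step occurs before the first $D$ step. *)

theory Defs
  imports Main
begin

datatype step = U | D | HU | HD  (* HU = umber horizontal, HD = denim horizontal *)

fun delta :: "step \<Rightarrow> int" where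
  "delta U = 1" | "delta D = -1" | "delta HU = 0" | "delta HD = 0"

(* height before the k-th step (0-indexed), i.e. after the first k steps *)
definition height :: "step list \<Rightarrow> nat \<Rightarrow> int" where
  "height p k = sum_list (map delta (take k p))"

definition is_Bal_star :: "nat \<Rightarrow> nat \<Rightarrow> step list \<Rightarrow> bool" where
  "is_Bal_star n i p \<longleftrightarrow>
     length p = n \<and> height p n = int i \<and>
     (\<forall>k\<le>n. height p k \<ge> 0) \<and>
     (\<forall>k<n. p ! k = HU \<longrightarrow> height p k \<noteq> 0) \<and>
     (\<forall>k<n. p ! k = HD \<longrightarrow> (\<exists>j<k. p ! j = D))"

definition Bal_star :: "nat \<Rightarrow> nat \<Rightarrow> step list set" where
  "Bal_star n i = {p. is_Bal_star n i p}"

definition binom :: "nat \<Rightarrow> int \<Rightarrow> int" where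
  "binom a c = (if c < 0 then 0 else int (a choose nat c))"

end

theory Submission
  imports Defs
begin

(* The defining conditions of Bal* are checked left to right by a finite-state reader whose
   state is the current height together with the flag "a D step has occurred".  Counting
   paths by final state gives a transfer-matrix recursion.  Paths without D use only U and
   umber steps, which gives binomial counts; paths with a D step satisfy the same recursion
   as the claimed closed form, where the missing umber step at height 0 is compensated by
   the reflection identity F(-1) = -F(0) of the closed form. *)

fun step_state :: "(int \<times> bool) option \<Rightarrow> step \<Rightarrow> (int \<times> bool) option" where
  "step_state None _ = None"
| "step_state (Some (h, b)) U = Some (h + 1, b)"
| "step_state (Some (h, b)) D = (if h \<ge> 1 then Some (h - 1, True) else None)"
| "step_state (Some (h, b)) HU = (if h \<noteq> 0 then Some (h, b) else None)"
| "step_state (Some (h, b)) HD = (if b then Some (h, b) else None)"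

definition path_state :: "step list \<Rightarrow> (int \<times> bool) option" where
  "path_state p = fold (\<lambda>s acc. step_state acc s) p (Some (0, False))"

lemma path_state_Nil [simp]: "path_state [] = Some (0, False)"
  by (simp add: path_state_def)

lemma path_state_append_singleton [simp]: "path_state (xs @ [x]) = step_state (path_state xs) x"
  by (simp add: path_state_def)

definition admissible :: "step list \<Rightarrow> bool" where
  "admissible p \<longleftrightarrow> (\<forall>k\<le>length p. height p k \<ge> 0) \<and>
     (\<forall>k<length p. p ! k = HU \<longrightarrow> height p k \<noteq> 0) \<and>
     (\<forall>k<length p. p ! k = HD \<longrightarrow> (\<exists>j<k. p ! j = D))"

lemma height_append_singleton:
  "height (xs @ [x]) k = (if k \<le> length xs then height xs k else height xs (length xs) + delta x)"
  by (simp add: height_def)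

lemma admissible_Nil: "admissible []"
  by (simp add: admissible_def height_def)

lemma admissible_append_singleton:
  "admissible (xs @ [x]) \<longleftrightarrow> admissible xs \<and> 0 \<le> height xs (length xs) + delta x \<and>
     (x = HU \<longrightarrow> height xs (length xs) \<noteq> 0) \<and> (x = HD \<longrightarrow> D \<in> set xs)"
proof -
  let ?n = "length xs"
  have D_before: "(\<exists>j<k. (xs @ [x]) ! j = D) \<longleftrightarrow> (\<exists>j<k. xs ! j = D)" if "k \<le> ?n" for k
    using that by (metis order_less_le_trans nth_append_left)
  have D_in_set: "(\<exists>j<?n. xs ! j = D) \<longleftrightarrow> D \<in> set xs"
    by (metis in_set_conv_nth)
  have All_le_Suc: "(\<forall>k\<le>Suc m. P k) \<longleftrightarrow> P (Suc m) \<and> (\<forall>k\<le>m. P k)" for m and P :: "nat \<Rightarrow> bool"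
    by (auto simp: le_Suc_eq)
  have heights: "(\<forall>k\<le>Suc ?n. 0 \<le> height (xs @ [x]) k) \<longleftrightarrow>
      (\<forall>k\<le>?n. 0 \<le> height xs k) \<and> 0 \<le> height xs ?n + delta x"
    by (auto simp: All_le_Suc height_append_singleton)
  have umber: "(\<forall>k<Suc ?n. (xs @ [x]) ! k = HU \<longrightarrow> height (xs @ [x]) k \<noteq> 0) \<longleftrightarrow>
      (\<forall>k<?n. xs ! k = HU \<longrightarrow> height xs k \<noteq> 0) \<and> (x = HU \<longrightarrow> height xs ?n \<noteq> 0)"
    by (auto simp: All_less_Suc height_append_singleton nth_append)
  have denim: "(\<forall>k<Suc ?n. (xs @ [x]) ! k = HD \<longrightarrow> (\<exists>j<k. (xs @ [x]) ! j = D)) \<longleftrightarrow>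
      (\<forall>k<?n. xs ! k = HD \<longrightarrow> (\<exists>j<k. xs ! j = D)) \<and> (x = HD \<longrightarrow> D \<in> set xs)"
    unfolding All_less_Suc nth_append_length using D_before D_in_set
    by (auto simp: nth_append_left)
  show ?thesis
    unfolding admissible_def length_append_singleton heights umber denim by auto
qed

lemma path_state_eq:
  "path_state p = (if admissible p then Some (height p (length p), D \<in> set p) else None)"
proof (induction p rule: rev_induct)
  case Nil
  then show ?case by (simp add: admissible_Nil height_def)
next
  case (snoc x xs)
  show ?case
  proof (cases "admissible xs")
    case False
    then show ?thesis using snoc by (simp add: admissible_append_singleton)
  next
    case True
    then have "height xs (length xs) \<ge> 0" by (simp add: admissible_def)
    with snoc True show ?thesis
      by (cases x) (auto simp: admissible_append_singleton height_append_singleton)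
  qed
qed

lemma path_state_height_nonneg: "path_state p = Some (h, b) \<Longrightarrow> h \<ge> 0"
  by (auto simp: path_state_eq admissible_def split: if_splits)

lemma UNIV_step: "(UNIV :: step set) = {U, D, HU, HD}"
  using step.exhaust by auto

instance step :: finite
  by standard (simp add: UNIV_step)

lemma finite_lists_length: "finite {xs :: 'a :: finite list. length xs = n}"
  using finite_lists_length_eq [OF finite_UNIV, of n] by simp

lemma card_lists_length_Suc:
  "card {p :: 'a :: finite list. length p = Suc n \<and> Q p} =
     (\<Sum>x\<in>UNIV. card {xs. length xs = n \<and> Q (xs @ [x])})"
proof -
  define S where "S x = {xs. length xs = n \<and> Q (xs @ [x])}" for x :: 'a
  have split: "{p :: 'a list. length p = Suc n \<and> Q p} = (\<Union>x. (\<lambda>xs. xs @ [x]) ` S x)"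
    by (auto simp: S_def length_Suc_conv_rev)
  have "finite (S x)" for x
    by (rule finite_subset [OF _ finite_lists_length [of n]]) (auto simp: S_def)
  then have "card (\<Union>x. (\<lambda>xs. xs @ [x]) ` S x) = (\<Sum>x\<in>UNIV. card ((\<lambda>xs. xs @ [x]) ` S x))"
    by (intro card_UN_disjoint) auto
  also have "\<dots> = (\<Sum>x\<in>UNIV. card (S x))"
    by (simp add: card_image inj_on_def)
  finally show ?thesis
    by (simp add: S_def split)
qed

definition count_paths :: "nat \<Rightarrow> int \<Rightarrow> bool \<Rightarrow> nat" where
  "count_paths n h b = card {p. length p = n \<and> path_state p = Some (h, b)}"

lemma count_paths_neg: "h < 0 \<Longrightarrow> count_paths n h b = 0"
proof -
  assume "h < 0"
  then have "{p. length p = n \<and> path_state p = Some (h, b)} = {}"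
    by (auto dest: path_state_height_nonneg)
  then show ?thesis
    unfolding count_paths_def by (metis card.empty)
qed

lemma count_paths_0: "count_paths 0 h b = (if h = 0 \<and> \<not> b then 1 else 0)"
proof -
  have "{p. length p = 0 \<and> path_state p = Some (h, b)} = (if h = 0 \<and> \<not> b then {[]} else {})"
    by auto
  then show ?thesis
    by (simp add: count_paths_def)
qed

lemma step_state_eq_Some_iff:
  "step_state s U = Some (h, b) \<longleftrightarrow> s = Some (h - 1, b)"
  "step_state s D = Some (h, b) \<longleftrightarrow> b \<and> h \<ge> 0 \<and> (s = Some (h + 1, True) \<or> s = Some (h + 1, False))"
  "step_state s HU = Some (h, b) \<longleftrightarrow> h \<noteq> 0 \<and> s = Some (h, b)"
  "step_state s HD = Some (h, b) \<longleftrightarrow> b \<and> s = Some (h, b)"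
  by (cases s; auto split: if_splits)+

lemma count_paths_Suc:
  "count_paths (Suc n) h b = count_paths n (h - 1) b
     + (if b \<and> h \<ge> 0 then count_paths n (h + 1) True + count_paths n (h + 1) False else 0)
     + (if h \<noteq> 0 then count_paths n h b else 0) + (if b then count_paths n h b else 0)"
proof -
  let ?ending = "\<lambda>x. card {xs. length xs = n \<and> path_state (xs @ [x]) = Some (h, b)}"
  have "?ending D = (if b \<and> h \<ge> 0 then count_paths n (h + 1) True + count_paths n (h + 1) False else 0)"
  proof (cases "b \<and> h \<ge> 0")
    case True
    have "{xs. length xs = n \<and> path_state (xs @ [D]) = Some (h, b)} =
       {xs. length xs = n \<and> path_state xs = Some (h + 1, True)} \<union>
       {xs. length xs = n \<and> path_state xs = Some (h + 1, False)}"
      using True by (auto simp: step_state_eq_Some_iff)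
    moreover have "finite {xs. length xs = n \<and> path_state xs = Some (h + 1, c)}" for c
      by (rule finite_subset [OF _ finite_lists_length [of n]]) auto
    ultimately show ?thesis
      using True by (simp add: card_Un_disjoint disjoint_iff count_paths_def)
  qed (auto simp: step_state_eq_Some_iff)
  moreover have "?ending U = count_paths n (h - 1) b"
    and "?ending HU = (if h \<noteq> 0 then count_paths n h b else 0)"
    and "?ending HD = (if b then count_paths n h b else 0)"
    by (simp_all add: step_state_eq_Some_iff count_paths_def)
  ultimately show ?thesis
    unfolding count_paths_def [of "Suc n"] card_lists_length_Suc UNIV_step by simp
qed

lemma binom_neg: "k < 0 \<Longrightarrow> binom a k = 0"
  by (simp add: binom_def)

lemma binom_greater: "int a < k \<Longrightarrow> binom a k = 0"
  by (simp add: binom_def binomial_eq_0 nat_less_iff)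

lemma binom_Suc: "binom (Suc a) k = binom a k + binom a (k - 1)"
proof (cases "k \<le> 0")
  case True
  then show ?thesis by (cases "k = 0") (auto simp: binom_def)
next
  case False
  then have "nat k = Suc (nat (k - 1))" by simp
  with False show ?thesis unfolding binom_def by simp
qed

lemma binom_Suc_Suc: "binom (Suc (Suc a)) k = binom a k + 2 * binom a (k - 1) + binom a (k - 2)"
  using binom_Suc [of "Suc a" k] binom_Suc [of a k] binom_Suc [of a "k - 1"] by simp

lemma binom_symmetric: "binom a k = binom a (int a - k)"
proof (cases "0 \<le> k \<and> k \<le> int a")
  case True
  then have "nat (int a - k) = a - nat k" by linarith
  with True show ?thesis
    unfolding binom_def by (simp add: binomial_symmetric [of "nat k" a] nat_le_iff)
qed (auto simp: binom_neg binom_greater)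

lemma count_paths_without_D: "int (count_paths (Suc n) h False) = binom n (h - 1)"
proof (induction n arbitrary: h)
  case 0
  show ?case by (simp add: count_paths_Suc count_paths_0 binom_def)
next
  case (Suc n)
  have "int (count_paths (Suc (Suc n)) h False) =
      int (count_paths (Suc n) (h - 1) False) + (if h \<noteq> 0 then int (count_paths (Suc n) h False) else 0)"
    by (simp add: count_paths_Suc [of "Suc n"])
  also have "\<dots> = binom n (h - 2) + (if h \<noteq> 0 then binom n (h - 1) else 0)"
    using Suc.IH [of "h - 1"] Suc.IH [of h] by simp
  also have "\<dots> = binom (Suc n) (h - 1)"
    using binom_Suc [of n "h - 1"] by (cases "h = 0") (simp_all add: binom_neg)
  finally show ?case .
qed

definition f_closed_form :: "nat \<Rightarrow> int \<Rightarrow> int" where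
  "f_closed_form n h = binom (2*n-2) (int n - h - 1) - binom (2*n-2) (int n - h - 2) - binom (n-2) (int n - h - 1)"

lemma f_closed_form_Suc_Suc:
  "f_closed_form (Suc (Suc k)) h = binom (2*k+2) (int k + 1 - h) - binom (2*k+2) (int k - h) - binom k (int k + 1 - h)"
  by (simp add: f_closed_form_def algebra_simps)

lemma f_closed_form_2: "h \<ge> 0 \<Longrightarrow> f_closed_form 2 h = (if h = 0 then 1 else 0)"
  using f_closed_form_Suc_Suc [of 0 h] by (auto simp: numeral_2_eq_2 binom_def)

lemma f_closed_form_reflect: "n \<ge> 2 \<Longrightarrow> f_closed_form n (-1) = - f_closed_form n 0"
proof -
  assume "n \<ge> 2"
  then obtain k where n: "n = Suc (Suc k)"
    using add_2_eq_Suc le_Suc_ex by metis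
  have "binom (2*k+2) (int k + 2) = binom (2*k+2) (int k)"
    using binom_symmetric [of "2*k+2" "int k + 2"] by simp
  then show ?thesis
    unfolding n f_closed_form_Suc_Suc by (simp add: binom_greater add.commute)
qed

lemma f_closed_form_Suc:
  assumes "n \<ge> 2"
  shows "f_closed_form (Suc n) h = f_closed_form n (h - 1) + f_closed_form n (h + 1) + binom (n - 1) h + 2 * f_closed_form n h"
proof -
  obtain k where n: "n = Suc (Suc k)"
    using assms add_2_eq_Suc le_Suc_ex by metis
  let ?M = "2*k+2"
  have "binom (Suc k) h = binom (Suc k) (int k + 1 - h)"
    using binom_symmetric [of "Suc k" h] by (simp add: algebra_simps)
  moreover have "binom (?M + 2) (int k + 2 - h) = binom ?M (int k + 2 - h) + 2 * binom ?M (int k + 1 - h) + binom ?M (int k - h)"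
    and "binom (?M + 2) (int k + 1 - h) = binom ?M (int k + 1 - h) + 2 * binom ?M (int k - h) + binom ?M (int k - 1 - h)"
    and "binom (Suc (Suc k)) (int k + 2 - h) = binom k (int k + 2 - h) + 2 * binom k (int k + 1 - h) + binom k (int k - h)"
    using binom_Suc_Suc [of ?M "int k + 2 - h"] binom_Suc_Suc [of ?M "int k + 1 - h"]
      binom_Suc_Suc [of k "int k + 2 - h"] by (simp_all add: algebra_simps)
  moreover have "binom (Suc (Suc k)) (int k + 2 - h) = binom (Suc k) (int k + 2 - h) + binom (Suc k) (int k + 1 - h)"
    using binom_Suc [of "Suc k" "int k + 2 - h"] by (simp add: algebra_simps)
  moreover have "f_closed_form (Suc n) h = binom (?M + 2) (int k + 2 - h) - binom (?M + 2) (int k + 1 - h) - binom (Suc k) (int k + 2 - h)"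
    using f_closed_form_Suc_Suc [of "Suc k" h] by (simp add: n algebra_simps)
  moreover have "f_closed_form n (h - 1) = binom ?M (int k + 2 - h) - binom ?M (int k + 1 - h) - binom k (int k + 2 - h)"
    and "f_closed_form n (h + 1) = binom ?M (int k - h) - binom ?M (int k - 1 - h) - binom k (int k - h)"
    and "f_closed_form n h = binom ?M (int k + 1 - h) - binom ?M (int k - h) - binom k (int k + 1 - h)"
    by (simp_all add: n f_closed_form_Suc_Suc algebra_simps)
  ultimately show ?thesis
    by (simp add: n)
qed

lemma count_paths_with_D:
  assumes "n \<ge> 2" and "h \<ge> 0"
  shows "int (count_paths n h True) = f_closed_form n h"
  using assms
proof (induction n arbitrary: h rule: nat_induct_at_least)
  case base
  have "count_paths 1 h' True = 0" for h'
    by (simp add: count_paths_Suc count_paths_0)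
  then have "int (count_paths 2 h True) = (if h = 0 then 1 else 0)"
    using count_paths_without_D [of 0 "h + 1"] base
    by (simp add: numeral_2_eq_2 count_paths_Suc [of "Suc 0"] binom_def)
  with base show ?case
    by (simp add: f_closed_form_2)
next
  case (Suc n)
  have "int (count_paths (Suc n) h True) = int (count_paths n (h - 1) True) + int (count_paths n (h + 1) True)
      + binom (n - 1) h + (if h \<noteq> 0 then int (count_paths n h True) else 0) + int (count_paths n h True)"
    using Suc.prems Suc.hyps count_paths_without_D [of "n - 1" "h + 1"]
    by (simp add: count_paths_Suc [of n] Suc_diff_le)
  \<comment> \<open>at height 0 the umber term is missing; f_closed_form n (-1) = - f_closed_form n 0 absorbs it\<close>
  moreover have "int (count_paths n (h - 1) True) = f_closed_form n (h - 1) + (if h = 0 then f_closed_form n h else 0)"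
    using Suc count_paths_neg [of "h - 1"] f_closed_form_reflect by (cases "h = 0") simp_all
  ultimately show ?case
    using Suc f_closed_form_Suc [of n h] by (simp split: if_splits)
qed

theorem lemma15:
  fixes n i :: nat
  assumes "n \<ge> 2" and "i \<le> n"
  shows "int (card {p \<in> Bal_star n i. D \<in> set p}) =
           binom (2*n-2) (int n - int i - 1) - binom (2*n-2) (int n - int i - 2)
           - binom (n-2) (int n - int i - 1)"
proof -
  have "{p \<in> Bal_star n i. D \<in> set p} = {p. length p = n \<and> path_state p = Some (int i, True)}"
    by (auto simp: Bal_star_def is_Bal_star_def path_state_eq admissible_def split: if_splits)
  then have "int (card {p \<in> Bal_star n i. D \<in> set p}) = int (count_paths n (int i) True)"
    by (simp add: count_paths_def)
  also have "\<dots> = f_closed_form n (int i)"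
    using assms(1) by (rule count_paths_with_D) simp
  finally show ?thesis
    by (simp add: f_closed_form_def)
qed

end
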